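(* Let $n$ be a positive integer, let $\mathcal F$ be an $\mathcal N$-saturated family of subsets of $[n]$, and let $A_1,\dots,A_k$ and $B_1,\dots,B_l$ be sets in $\mathcal F$, where $k,l\ge1$, such that $\bigcup_{i=1}^l B_i\subseteq\bigcap_{i=1}^k A_i$. Then there exists $M\in\mathcal F$ such that $\bigcup_{i=1}^l B_i\subseteq M\subseteq\bigcap_{i=1}^k A_i$.
   Context: The poset $\mathcal N$ has four elements $a,b,c,d$ with $a<c$, $b<c$, $b<d$ and no other comparabilities. A family $\mathcal Q$ of sets (ordered by inclusion) contains an induced copy of $\mathcal N$ if there are distinct sets in $\mathcal Q$ whose inclusion relations are exactly those of $a,b,c,d$ above. A family $\mathcal F$ of subsets of $[n]=\{1,\dots,n\}$ is $\mathcal N$-saturated if $\mathcal F$ contains no induced copy of $\mathcal N$, but for every $S\subseteq[n]$ with $S\notin\mathcal F$, the family $\mathcal F\cup\{S\}$ contains an induced copy of $\mathcal N$. *)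

theory Defs
  imports Main
begin

definition incomparable :: "'a set \<Rightarrow> 'a set \<Rightarrow> bool" where
  "incomparable X Y \<longleftrightarrow> \<not> X \<subseteq> Y \<and> \<not> Y \<subseteq> X"

definition has_induced_N :: "'a set set \<Rightarrow> bool" where
  "has_induced_N Q \<longleftrightarrow> (\<exists>a\<in>Q. \<exists>b\<in>Q. \<exists>c\<in>Q. \<exists>d\<in>Q.
      distinct [a, b, c, d] \<and>
      a \<subset> c \<and> b \<subset> c \<and> b \<subset> d \<and>
      incomparable a b \<and> incomparable a d \<and> incomparable c d)"

definition N_saturated :: "nat \<Rightarrow> nat set set \<Rightarrow> bool" where
  "N_saturated n F \<longleftrightarrow> F \<subseteq> Pow {1..n} \<and> \<not> has_induced_N F \<and>
      (\<forall>S. S \<subseteq> {1..n} \<longrightarrow> S \<notin> F \<longrightarrow> has_induced_N (insert S F))"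

end

theory Submission
  imports Defs
begin

text \<open>Let \<open>D\<close> be the union of all members of \<open>F\<close> lying below \<open>\<Inter>A\<^sub>i\<close>. Within \<open>F\<close>, every
  set not below \<open>D\<close> is separated from \<open>D\<close> by some \<open>A\<^sub>i \<supseteq> D\<close>, and every set not above \<open>D\<close>
  is separated from it by a member \<open>Z \<subseteq> D\<close>. So if \<open>D\<close> occurs in a copy of \<open>\<N>\<close> in
  \<open>F \<union> {D}\<close>, it can be replaced by a larger member of \<open>F\<close> (when it is a top element of
  \<open>\<N>\<close>) or a smaller one (when it is a bottom element) without destroying the copy. As \<open>F\<close>
  has no copy of \<open>\<N>\<close>, saturation forces \<open>D \<in> F\<close>, and \<open>M = D\<close> works.\<close>

definition N_config :: "'a set \<Rightarrow> 'a set \<Rightarrow> 'a set \<Rightarrow> 'a set \<Rightarrow> bool" where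
  "N_config a b c d \<longleftrightarrow> a \<subset> c \<and> b \<subset> c \<and> b \<subset> d \<and>
      incomparable a b \<and> incomparable a d \<and> incomparable c d"

lemma N_config_distinct: "N_config a b c d \<Longrightarrow> distinct [a, b, c, d]"
  unfolding N_config_def incomparable_def by auto

lemma has_induced_N_iff:
  "has_induced_N Q \<longleftrightarrow> (\<exists>a\<in>Q. \<exists>b\<in>Q. \<exists>c\<in>Q. \<exists>d\<in>Q. N_config a b c d)"
  unfolding has_induced_N_def N_config_def[symmetric] using N_config_distinct by blast

lemma N_config_shrink_a: "N_config a b c d \<Longrightarrow> Z \<subseteq> a \<Longrightarrow> \<not> Z \<subseteq> d \<Longrightarrow> N_config Z b c d"
  unfolding N_config_def incomparable_def by blast

lemma N_config_shrink_b: "N_config a b c d \<Longrightarrow> Z \<subseteq> b \<Longrightarrow> \<not> Z \<subseteq> a \<Longrightarrow> N_config a Z c d"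
  unfolding N_config_def incomparable_def by blast

lemma N_config_grow_c: "N_config a b c d \<Longrightarrow> c \<subseteq> Y \<Longrightarrow> \<not> d \<subseteq> Y \<Longrightarrow> N_config a b Y d"
  unfolding N_config_def incomparable_def by blast

lemma N_config_grow_d: "N_config a b c d \<Longrightarrow> d \<subseteq> Y \<Longrightarrow> \<not> a \<subseteq> Y \<Longrightarrow> N_config a b c Y"
  unfolding N_config_def incomparable_def by blast

lemma has_induced_NI:
  "a \<in> Q \<Longrightarrow> b \<in> Q \<Longrightarrow> c \<in> Q \<Longrightarrow> d \<in> Q \<Longrightarrow> N_config a b c d \<Longrightarrow> has_induced_N Q"
  unfolding has_induced_N_iff by blast

lemma has_induced_N_insert_separated:
  assumes N: "has_induced_N (insert D F)"
    and above: "\<And>x. x \<in> F \<Longrightarrow> \<not> x \<subseteq> D \<Longrightarrow> \<exists>Y\<in>F. D \<subseteq> Y \<and> \<not> x \<subseteq> Y"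
    and below: "\<And>y. y \<in> F \<Longrightarrow> \<not> D \<subseteq> y \<Longrightarrow> \<exists>Z\<in>F. Z \<subseteq> D \<and> \<not> Z \<subseteq> y"
  shows "has_induced_N F"
proof -
  obtain a b c d where abcd: "a \<in> insert D F" "b \<in> insert D F" "c \<in> insert D F" "d \<in> insert D F"
    and N_abcd: "N_config a b c d"
    using N unfolding has_induced_N_iff by blast
  have dist: "distinct [a, b, c, d]"
    using N_abcd by (rule N_config_distinct)
  consider "a \<in> F" "b \<in> F" "c \<in> F" "d \<in> F"
    | "a = D" "b \<in> F" "c \<in> F" "d \<in> F"
    | "b = D" "a \<in> F" "c \<in> F" "d \<in> F"
    | "c = D" "a \<in> F" "b \<in> F" "d \<in> F"
    | "d = D" "a \<in> F" "b \<in> F" "c \<in> F"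
    using abcd dist by auto
  then show ?thesis
  proof cases
    case 1
    then show ?thesis
      using N_abcd by (rule has_induced_NI)
  next
    case 2
    with N_abcd have "\<not> D \<subseteq> d"
      unfolding N_config_def incomparable_def by blast
    with below \<open>d \<in> F\<close> obtain Z where "Z \<in> F" "Z \<subseteq> a" "\<not> Z \<subseteq> d"
      unfolding \<open>a = D\<close> by blast
    with 2 show ?thesis
      using N_config_shrink_a[OF N_abcd] by (blast intro: has_induced_NI)
  next
    case 3
    with N_abcd have "\<not> D \<subseteq> a"
      unfolding N_config_def incomparable_def by blast
    with below \<open>a \<in> F\<close> obtain Z where "Z \<in> F" "Z \<subseteq> b" "\<not> Z \<subseteq> a"
      unfolding \<open>b = D\<close> by blast
    with 3 show ?thesis
      using N_config_shrink_b[OF N_abcd] by (blast intro: has_induced_NI)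
  next
    case 4
    with N_abcd have "\<not> d \<subseteq> D"
      unfolding N_config_def incomparable_def by blast
    with above \<open>d \<in> F\<close> obtain Y where "Y \<in> F" "c \<subseteq> Y" "\<not> d \<subseteq> Y"
      unfolding \<open>c = D\<close> by blast
    with 4 show ?thesis
      using N_config_grow_c[OF N_abcd] by (blast intro: has_induced_NI)
  next
    case 5
    with N_abcd have "\<not> a \<subseteq> D"
      unfolding N_config_def incomparable_def by blast
    with above \<open>a \<in> F\<close> obtain Y where "Y \<in> F" "d \<subseteq> Y" "\<not> a \<subseteq> Y"
      unfolding \<open>d = D\<close> by blast
    with 5 show ?thesis
      using N_config_grow_d[OF N_abcd] by (blast intro: has_induced_NI)
  qed
qed

lemma N_saturated_mem_if_separated:
  assumes sat: "N_saturated n F" and "D \<subseteq> {1..n}"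
    and above: "\<And>x. x \<in> F \<Longrightarrow> \<not> x \<subseteq> D \<Longrightarrow> \<exists>Y\<in>F. D \<subseteq> Y \<and> \<not> x \<subseteq> Y"
    and below: "\<And>y. y \<in> F \<Longrightarrow> \<not> D \<subseteq> y \<Longrightarrow> \<exists>Z\<in>F. Z \<subseteq> D \<and> \<not> Z \<subseteq> y"
  shows "D \<in> F"
proof (rule ccontr)
  assume "D \<notin> F"
  with sat \<open>D \<subseteq> {1..n}\<close> have "has_induced_N (insert D F)"
    unfolding N_saturated_def by blast
  then have "has_induced_N F"
    using above below by (rule has_induced_N_insert_separated)
  with sat show False
    unfolding N_saturated_def by blast
qed

lemma N_saturated_Union_below_Inter_mem:
  assumes sat: "N_saturated n F" and "\<A> \<subseteq> F" "\<A> \<noteq> {}"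
  shows "\<Union>{Z\<in>F. Z \<subseteq> \<Inter>\<A>} \<in> F"
proof (rule N_saturated_mem_if_separated[OF sat])
  let ?D = "\<Union>{Z\<in>F. Z \<subseteq> \<Inter>\<A>}"
  have D_below: "?D \<subseteq> A" if "A \<in> \<A>" for A
    using that by blast
  obtain A where "A \<in> \<A>"
    using \<open>\<A> \<noteq> {}\<close> by blast
  moreover have "A \<subseteq> {1..n}"
    using sat \<open>A \<in> \<A>\<close> \<open>\<A> \<subseteq> F\<close> unfolding N_saturated_def by blast
  ultimately show "?D \<subseteq> {1..n}"
    using D_below by blast
  show "\<exists>Y\<in>F. ?D \<subseteq> Y \<and> \<not> x \<subseteq> Y" if "x \<in> F" "\<not> x \<subseteq> ?D" for x
  proof -
    have "\<not> x \<subseteq> \<Inter>\<A>"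
      using that by blast
    then obtain A where "A \<in> \<A>" "\<not> x \<subseteq> A"
      by blast
    then show ?thesis
      using D_below \<open>\<A> \<subseteq> F\<close> by blast
  qed
  show "\<exists>Z\<in>F. Z \<subseteq> ?D \<and> \<not> Z \<subseteq> y" if "\<not> ?D \<subseteq> y" for y
    using that by blast
qed

theorem lemma2p3:
  fixes n k l :: nat and F :: "nat set set" and A B :: "nat \<Rightarrow> nat set"
  assumes "n \<ge> 1"
    and "N_saturated n F"
    and "k \<ge> 1" and "l \<ge> 1"
    and "\<forall>i\<in>{1..k}. A i \<in> F"
    and "\<forall>i\<in>{1..l}. B i \<in> F"
    and "(\<Union>i\<in>{1..l}. B i) \<subseteq> (\<Inter>i\<in>{1..k}. A i)"
  shows "\<exists>M\<in>F. (\<Union>i\<in>{1..l}. B i) \<subseteq> M \<and> M \<subseteq> (\<Inter>i\<in>{1..k}. A i)"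
proof
  let ?M = "\<Union>{Z\<in>F. Z \<subseteq> (\<Inter>i\<in>{1..k}. A i)}"
  have "A ` {1..k} \<subseteq> F" "A ` {1..k} \<noteq> {}"
    using assms(3,5) by auto
  with assms(2) show "?M \<in> F"
    by (rule N_saturated_Union_below_Inter_mem)
  have "B i \<subseteq> ?M" if "i \<in> {1..l}" for i
    using that assms(6,7) by blast
  then show "(\<Union>i\<in>{1..l}. B i) \<subseteq> ?M \<and> ?M \<subseteq> (\<Inter>i\<in>{1..k}. A i)"
    by blast
qed

end
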